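(* Let $\Omega=\{0,1\}^{\mathbb{N}}$ with canonical process $X=(X_t)_{t\in\mathbb{N}}$, natural filtration $\mathcal{F}_t=\sigma(X_s,s\le t)$ ($\mathcal{F}_0$ trivial), $\mathcal{F}=\sigma(\bigcup_t\mathcal{F}_t)$. For $n\in\mathbb{N}_0$ let $\mathbb{P}_n$ be the probability measure assigning probability $1/2$ to the all-zeros sequence $0^{\mathbb{N}}$ and probability $1/2$ to the sequence $0^n\,1\,0^{\mathbb{N}}$ (exactly one $1$, at position $n+1$). Let $\mathcal{P}=\{\mathbb{P}_n\}_{n\in\mathbb{N}_0}$ and $A=\{0^{\mathbb{N}}\}$. Then $\nu^*(A)=1/2$, $\mu^*(A)=1$, and $\mu^*(A^c)=1/2$.
   Context: Stopping times are with respect to the filtration above (values in $\mathbb{N}_0\cup\{\infty\}$), $\mathcal{T}$ is the set of all stopping times, and for $B\subseteq\Omega$: $\mu^*(B) = \inf_{\tau\in\mathcal{T}:\, B\subseteq\{\tau<\infty\}} \sup_{\mathbb{P}\in\mathcal{P}} \mathbb{P}(\tau<\infty)$ (the inverse-capital measure), and $\nu^*(B) = \sup_{\mathbb{P}\in\mathcal{P}}\mathbb{P}(B)$ for measurable $B$. *)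

theory Defs
  imports "HOL-Probability.Probability"
begin

text \<open>Sample space Omega = {0,1}^N, encoded as nat => bool with
  omega i = X_(i+1) (so coordinate i is the value of the canonical process at time i+1;
  True = 1, False = 0).\<close>

type_synonym path = "nat \<Rightarrow> bool"

definition filt :: "nat \<Rightarrow> path measure" where
  "filt t = sigma UNIV {{\<omega>. \<omega> i} | i. i < t}"

definition Finf :: "path measure" where
  "Finf = sigma UNIV {{\<omega>. \<omega> i} | i. True}"

definition is_stopping_time :: "(path \<Rightarrow> enat) \<Rightarrow> bool" where
  "is_stopping_time \<tau> \<longleftrightarrow> (\<forall>t::nat. {\<omega>. \<tau> \<omega> = enat t} \<in> sets (filt t))"

definition nu_star :: "(nat \<Rightarrow> path measure) \<Rightarrow> path set \<Rightarrow> real" where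
  "nu_star P B = (SUP n. measure (P n) B)"

definition mu_star :: "(nat \<Rightarrow> path measure) \<Rightarrow> path set \<Rightarrow> real" where
  "mu_star P B = (INF \<tau> \<in> {\<tau>. is_stopping_time \<tau> \<and> B \<subseteq> {\<omega>. \<tau> \<omega> < \<infinity>}}.
                    (SUP n. measure (P n) {\<omega>. \<tau> \<omega> < \<infinity>}))"

text \<open>The all-zeros path and the path 0^n 1 0^N (single 1 at position n+1, i.e. coordinate n).\<close>
definition zeros :: path where "zeros = (\<lambda>_. False)"
definition spike :: "nat \<Rightarrow> path" where "spike n = (\<lambda>i. i = n)"

definition Pn :: "nat \<Rightarrow> path measure" where
  "Pn n = measure_pmf (pmf_of_set {zeros, spike n})"

end

theory Submission
  imports Defs
begin

text \<open>
  Every path other than the all-zeros path eventually shows a 1, so the first time a 1 is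
  observed is a stopping time that is finite exactly off the all-zeros path; under each
  \<open>Pn n\<close> it is finite with probability 1/2, giving \<open>\<mu>\<^sup>*(A\<^sup>c) = 1/2\<close>.
  Conversely, a stopping time that is finite at the all-zeros path stops there at some
  time \<open>t\<close> after seeing only zeros, so it must also stop on the path \<open>0\<^sup>t 1 0\<^sup>\<nat>\<close>,
  which has the same history up to time \<open>t\<close>; under \<open>Pn t\<close> it is therefore finite almost
  surely, giving \<open>\<mu>\<^sup>*(A) = 1\<close>, although \<open>\<nu>\<^sup>*(A) = 1/2\<close>.
\<close>

lemma sets_filt: "sets (filt t) = sigma_sets UNIV {{\<omega>. \<omega> i} | i. i < t}"
  unfolding filt_def by (rule sets_measure_of) auto

lemma sets_Finf: "sets Finf = sigma_sets UNIV {{\<omega>. \<omega> i} | i. True}"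
  unfolding Finf_def by (rule sets_measure_of) auto

lemma coordinate_in_filt: "i < t \<Longrightarrow> {\<omega>. \<omega> i} \<in> sets (filt t)"
  unfolding sets_filt by (rule sigma_sets.Basic) auto

lemma filt_determined:
  assumes "A \<in> sets (filt t)" and "\<And>i. i < t \<Longrightarrow> \<omega> i = \<omega>' i"
  shows "\<omega> \<in> A \<longleftrightarrow> \<omega>' \<in> A"
  using assms(1) unfolding sets_filt
  by (induction rule: sigma_sets.induct) (use assms(2) in auto)

lemma stopping_time_determined:
  assumes "is_stopping_time \<tau>" and "\<tau> \<omega> = enat t" and "\<And>i. i < t \<Longrightarrow> \<omega> i = \<omega>' i"
  shows "\<tau> \<omega>' = enat t"
  using filt_determined[of "{\<omega>. \<tau> \<omega> = enat t}" t \<omega> \<omega>'] assms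
  unfolding is_stopping_time_def by auto

lemma is_stopping_time_const: "is_stopping_time (\<lambda>_. enat s)"
  unfolding is_stopping_time_def
proof
  fix t
  show "{\<omega>::path. enat s = enat t} \<in> sets (filt t)"
    by (cases "s = t") (simp_all add: sets_filt sigma_sets_top sigma_sets.Empty)
qed

text \<open>Coordinate \<open>i\<close> is revealed at time \<open>i + 1\<close>, hence the \<open>Suc\<close>.\<close>
definition first_one :: "path \<Rightarrow> enat" where
  "first_one \<omega> = (if \<exists>i. \<omega> i then enat (Suc (LEAST i. \<omega> i)) else \<infinity>)"

lemma first_one_eq_Suc_iff:
  "first_one \<omega> = enat (Suc k) \<longleftrightarrow> \<omega> \<in> {\<omega>. \<omega> k} \<inter> (\<Inter>i\<in>{..<k}. - {\<omega>. \<omega> i})"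
proof
  assume "first_one \<omega> = enat (Suc k)"
  then have ex: "\<exists>i. \<omega> i" and least: "(LEAST i. \<omega> i) = k"
    by (auto simp: first_one_def split: if_splits)
  show "\<omega> \<in> {\<omega>. \<omega> k} \<inter> (\<Inter>i\<in>{..<k}. - {\<omega>. \<omega> i})"
    using LeastI_ex[OF ex] not_less_Least[of _ "\<lambda>i. \<omega> i"] least by auto
next
  assume first: "\<omega> \<in> {\<omega>. \<omega> k} \<inter> (\<Inter>i\<in>{..<k}. - {\<omega>. \<omega> i})"
  then have "(LEAST i. \<omega> i) = k"
    by (intro Least_equality) (auto simp: not_less[symmetric])
  then show "first_one \<omega> = enat (Suc k)"
    using first by (auto simp: first_one_def)
qed

lemma is_stopping_time_first_one: "is_stopping_time first_one"
  unfolding is_stopping_time_def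
proof
  fix t
  show "{\<omega>. first_one \<omega> = enat t} \<in> sets (filt t)"
  proof (cases t)
    case 0
    then have "{\<omega>. first_one \<omega> = enat t} = {}"
      by (auto simp: first_one_def split: if_splits)
    then show ?thesis by simp
  next
    case (Suc k)
    have "- {\<omega>. \<omega> i} \<in> sets (filt t)" if "i < k" for i
      unfolding sets_filt Compl_eq_Diff_UNIV
      by (rule sigma_sets.Compl, rule sigma_sets.Basic) (use that Suc in auto)
    then have "(\<Inter>i\<in>{..<k}. - {\<omega>. \<omega> i}) \<in> sets (filt t)"
    proof (cases "k = 0")
      case True
      then show ?thesis by (simp add: sets_filt sigma_sets_top)
    qed (auto intro!: sets.finite_INT)
    moreover have "{\<omega>. \<omega> k} \<in> sets (filt t)"
      using Suc by (simp add: coordinate_in_filt)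
    moreover have "{\<omega>. first_one \<omega> = enat t} = {\<omega>. \<omega> k} \<inter> (\<Inter>i\<in>{..<k}. - {\<omega>. \<omega> i})"
      by (rule set_eqI) (simp only: mem_Collect_eq Suc first_one_eq_Suc_iff)
    ultimately show ?thesis by (simp only: sets.Int)
  qed
qed

lemma SUP_measure_le_1:
  assumes "\<And>n. prob_space (P n)"
  shows "(SUP n. measure (P n) A) \<le> 1"
  by (rule cSUP_least) (auto intro: prob_space.prob_le_1[OF assms])

lemma measure_le_SUP_measure:
  assumes "\<And>n. prob_space (P n)"
  shows "measure (P m) A \<le> (SUP n. measure (P n) A)"
  by (rule cSUP_upper) (auto intro!: bdd_aboveI prob_space.prob_le_1[OF assms])

lemma mu_star_le:
  assumes "\<And>n. prob_space (P n)"
    and "is_stopping_time \<tau>" and "B \<subseteq> {\<omega>. \<tau> \<omega> < \<infinity>}"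
  shows "mu_star P B \<le> (SUP n. measure (P n) {\<omega>. \<tau> \<omega> < \<infinity>})"
  unfolding mu_star_def
proof (rule cINF_lower)
  have "0 \<le> (SUP n. measure (P n) A)" for A
    using measure_le_SUP_measure[of P 0 A, OF assms(1)] measure_nonneg[of "P 0" A] by linarith
  then show "bdd_below ((\<lambda>\<tau>. SUP n. measure (P n) {\<omega>. \<tau> \<omega> < \<infinity>}) `
      {\<tau>. is_stopping_time \<tau> \<and> B \<subseteq> {\<omega>. \<tau> \<omega> < \<infinity>}})"
    by (intro bdd_belowI[of _ 0]) blast
qed (use assms in auto)

lemma mu_star_greatest:
  assumes "is_stopping_time \<tau>\<^sub>0" and "B \<subseteq> {\<omega>. \<tau>\<^sub>0 \<omega> < \<infinity>}"
    and "\<And>\<tau>. is_stopping_time \<tau> \<Longrightarrow> B \<subseteq> {\<omega>. \<tau> \<omega> < \<infinity>} \<Longrightarrow>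
           c \<le> (SUP n. measure (P n) {\<omega>. \<tau> \<omega> < \<infinity>})"
  shows "c \<le> mu_star P B"
  unfolding mu_star_def by (rule cINF_greatest) (use assms in auto)

lemma prob_space_Pn: "prob_space (Pn n)"
  unfolding Pn_def by (rule prob_space_measure_pmf)

lemma zeros_neq_spike: "zeros \<noteq> spike n"
  unfolding zeros_def spike_def by metis

lemma measure_Pn: "measure (Pn n) A = card (A \<inter> {zeros, spike n}) / 2"
  unfolding Pn_def using zeros_neq_spike[of n]
  by (subst measure_pmf_of_set) (auto simp: Int_commute)

lemma zeros_in_Finf: "{zeros} \<in> sets Finf"
proof -
  have "- {\<omega>. \<omega> i} \<in> sets Finf" for i
    unfolding sets_Finf Compl_eq_Diff_UNIV by (blast intro: sigma_sets.Basic sigma_sets.Compl)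
  moreover have "{zeros} = (\<Inter>i. - {\<omega>. \<omega> i})"
    unfolding zeros_def by auto
  ultimately show ?thesis by auto
qed

lemma nu_star_Pn_zeros: "nu_star Pn {zeros} = 1/2"
  unfolding nu_star_def measure_Pn using zeros_neq_spike by simp

lemma mu_star_Pn_zeros: "mu_star Pn {zeros} = 1"
proof (rule antisym)
  have "mu_star Pn {zeros} \<le> (SUP n. measure (Pn n) {\<omega>. enat 0 < \<infinity>})"
    by (rule mu_star_le[of Pn, OF prob_space_Pn is_stopping_time_const]) simp
  also have "\<dots> \<le> 1"
    by (rule SUP_measure_le_1[of Pn, OF prob_space_Pn])
  finally show "mu_star Pn {zeros} \<le> 1" .
next
  show "1 \<le> mu_star Pn {zeros}"
  proof (rule mu_star_greatest[OF is_stopping_time_const[of 0]])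
    fix \<tau> assume \<tau>: "is_stopping_time \<tau>" "{zeros} \<subseteq> {\<omega>. \<tau> \<omega> < \<infinity>}"
    then obtain t where t: "\<tau> zeros = enat t"
      by (cases "\<tau> zeros") auto
    have "\<tau> (spike t) = enat t"
      using stopping_time_determined[OF \<tau>(1) t] by (simp add: zeros_def spike_def)
    then have "measure (Pn t) {\<omega>. \<tau> \<omega> < \<infinity>} = 1"
      using t zeros_neq_spike[of t] by (simp add: measure_Pn)
    then show "1 \<le> (SUP n. measure (Pn n) {\<omega>. \<tau> \<omega> < \<infinity>})"
      using measure_le_SUP_measure[of Pn, OF prob_space_Pn] by metis
  qed (simp add: zero_enat_def)
qed

lemma mu_star_Pn_not_zeros: "mu_star Pn (- {zeros}) = 1/2"
proof (rule antisym)
  have "- {zeros} \<subseteq> {\<omega>. first_one \<omega> < \<infinity>}"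
    by (auto simp: first_one_def zeros_def)
  note covers = is_stopping_time_first_one this
  have "first_one zeros = \<infinity>" and "first_one (spike n) < \<infinity>" for n
    by (auto simp: first_one_def zeros_def spike_def)
  then have "{\<omega>. first_one \<omega> < \<infinity>} \<inter> {zeros, spike n} = {spike n}" for n
    by auto
  then have "(SUP n. measure (Pn n) {\<omega>. first_one \<omega> < \<infinity>}) = 1/2"
    by (simp add: measure_Pn)
  then show "mu_star Pn (- {zeros}) \<le> 1/2"
    using mu_star_le[of Pn, OF prob_space_Pn covers] by linarith
  show "1/2 \<le> mu_star Pn (- {zeros})"
  proof (rule mu_star_greatest[OF covers])
    fix \<tau> assume "is_stopping_time \<tau>" "- {zeros} \<subseteq> {\<omega>. \<tau> \<omega> < \<infinity>}"
    then have "spike 0 \<in> {\<omega>. \<tau> \<omega> < \<infinity>} \<inter> {zeros, spike 0}"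
      using zeros_neq_spike[of 0, symmetric] by blast
    then have "1 \<le> card ({\<omega>. \<tau> \<omega> < \<infinity>} \<inter> {zeros, spike 0})"
      by (metis One_nat_def Suc_leI card_gt_0_iff empty_iff finite.emptyI finite.insertI
          finite_Int)
    then have "1/2 \<le> measure (Pn 0) {\<omega>. \<tau> \<omega> < \<infinity>}"
      by (simp add: measure_Pn)
    then show "1/2 \<le> (SUP n. measure (Pn n) {\<omega>. \<tau> \<omega> < \<infinity>})"
      using measure_le_SUP_measure[of Pn, OF prob_space_Pn] order_trans by blast
  qed
qed

theorem mainTheorem9:
  shows "{zeros} \<in> sets Finf \<and> nu_star Pn {zeros} = 1/2 \<and> mu_star Pn {zeros} = 1
         \<and> mu_star Pn (- {zeros}) = 1/2"
  using zeros_in_Finf nu_star_Pn_zeros mu_star_Pn_zeros mu_star_Pn_not_zeros by blast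

end
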